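(* Let $A$ be a set and $\phi$ a linear form on the span of nonempty words over $A$. Extend $\phi$ to a linear form on $H_{\mathcal S}(A)$ by setting $\phi(T\otimes w)=\phi(w)$ if $T$ is a corolla (a tree whose only internal vertex is the root), $\phi(T\otimes w)=0$ for the other decorated trees, and $\phi=0$ on $1$ and on products of two or more decorated trees. Let $\Phi$ be the character (unital algebra morphism $H_{\mathcal S}(A)\to\mathbb{C}$) that agrees with $\phi$ on decorated trees. Let $\kappa$ be the linear form on $H_{\mathcal S}(A)$ vanishing on $1$ and on products of two or more decorated trees, and given on decorated trees by $$\kappa(T\otimes a_1\cdots a_n)=\begin{cases}(-1)^{i(T)-1}\displaystyle\prod_{v\text{ internal vertex of }T}\phi\Big(\prod_{v\measuredangle i}a_i\Big)&\text{if }T\in\mathrm{PST}_n,\\ 0&\text{otherwise.}\end{cases}$$ Then $\Phi=\epsilon+\kappa\prec\Phi$.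
   Context: A reduced plane tree is a rooted plane tree in which every internal node has at least two children; its weight is its number of leaves minus 1, and $i(T)$ is its number of internal vertices. A tree is prime if it has at least two leaves and the rightmost child of its root is a leaf; $\mathrm{PST}_n$ is the set of prime trees of weight $n$. For $T$ with leaves $\ell_1,\dots,\ell_{n+1}$ from left to right, $v\measuredangle i$ means that the internal vertex $v$ is the lowest common ancestor of $\ell_i$ and $\ell_{i+1}$ ($v$ has a clear view to the $i$th sector); the inner product is taken in increasing order of $i$. $H_{\mathcal S}(A)$ is the algebra with basis finite products (concatenations) of $A$-decorated trees $T\otimes a_1\cdots a_n$ (a tree of weight $n\ge1$ with sectors labeled left to right by $a_1,\dots,a_n\in A$), unit $1$ the empty product. An admissible cut of $T$ is a (possibly empty) set $c$ of internal vertices with at most one vertex on each root-to-leaf path; $P^c(T)$ is the left-to-right product of the subtrees rooted at vertices of $c$, each decorated by the letters of the sectors seen by its vertices, and $R^c(T)$ is $T$ with these subtrees replaced by leaves, decorated by the letters of the sectors seen by its remaining internal vertices. $\Delta(T\otimes w)=\sum_cR^c(T)\otimes P^c(T)$, extended multiplicatively; $\Delta^+_{\prec}(T\otimes w)$ is this sum restricted to cuts for which the rightmost leaf of $T$ remains in $R^c(T)$, and $\Delta^+_{\prec}(x_1\cdots x_s)=\Delta^+_{\prec}(x_1)\Delta(x_2\cdots x_s)$. For linear forms $f,g$ on $H_{\mathcal S}(A)$, $(f\prec g)(1)=0$ and $(f\prec g)(x)=m\circ(f\otimes g)\circ\Delta^+_{\prec}(x)$ for $x$ in the augmentation ideal,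 $m$ being multiplication in $\mathbb{C}$. $\epsilon$ is the counit: $\epsilon(1)=1$ and $\epsilon=0$ on the augmentation ideal. *)

theory Defs
  imports Complex_Main "HOL-Library.Sublist" "HOL-Library.List_Lexorder"
begin

datatype ptree = Leaf | Node "ptree list"

type_synonym path = "nat list"

fun reduced :: "ptree \<Rightarrow> bool" where
  "reduced Leaf = True"
| "reduced (Node ts) = (length ts \<ge> 2 \<and> (\<forall>s\<in>set ts. reduced s))"

fun sub :: "ptree \<Rightarrow> path \<Rightarrow> ptree option" where
  "sub t [] = Some t"
| "sub Leaf (k # p) = None"
| "sub (Node ts) (k # p) = (if k < length ts then sub (ts ! k) p else None)"

fun leafpaths :: "ptree \<Rightarrow> path list"
and leafpathss :: "nat \<Rightarrow> ptree list \<Rightarrow> path list" where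
  "leafpaths Leaf = [[]]"
| "leafpaths (Node ts) = leafpathss 0 ts"
| "leafpathss k [] = []"
| "leafpathss k (s # ss) = map ((#) k) (leafpaths s) @ leafpathss (Suc k) ss"

definition nleaves :: "ptree \<Rightarrow> nat" where
  "nleaves t = length (leafpaths t)"

definition weight :: "ptree \<Rightarrow> nat" where
  "weight t = nleaves t - 1"

definition internal :: "ptree \<Rightarrow> path set" where
  "internal t = {p. \<exists>ts. sub t p = Some (Node ts)}"

definition ninternal :: "ptree \<Rightarrow> nat" where
  "ninternal t = card (internal t)"

definition corolla :: "ptree \<Rightarrow> bool" where
  "corolla t \<longleftrightarrow> internal t = {[]}"

definition prime_tree :: "ptree \<Rightarrow> bool" where
  "prime_tree t \<longleftrightarrow> nleaves t \<ge> 2 \<and>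
     (case t of Leaf \<Rightarrow> False | Node ts \<Rightarrow> ts \<noteq> [] \<and> last ts = Leaf)"

definition PST :: "nat \<Rightarrow> ptree set" where
  "PST n = {t. reduced t \<and> prime_tree t \<and> weight t = n}"

(* v sees sector j (0-based: the sector between the leaves number j and j+1
   counted from 0, i.e. the paper's sector j+1): v is the lowest common ancestor *)
definition sees :: "ptree \<Rightarrow> path \<Rightarrow> nat \<Rightarrow> bool" where
  "sees t v j \<longleftrightarrow> v \<in> internal t \<and> Suc j < nleaves t \<and>
     prefix v (leafpaths t ! j) \<and> prefix v (leafpaths t ! Suc j) \<and>
     (\<forall>u. prefix u (leafpaths t ! j) \<and> prefix u (leafpaths t ! Suc j) \<longrightarrow> prefix u v)"

type_synonym 'a dtree = "ptree \<times> 'a list"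

definition dtree_ok :: "'a set \<Rightarrow> 'a dtree \<Rightarrow> bool" where
  "dtree_ok A x \<longleftrightarrow> reduced (fst x) \<and> weight (fst x) \<ge> 1 \<and>
     length (snd x) = weight (fst x) \<and> set (snd x) \<subseteq> A"

(* basis elements of H_S(A): finite products (lists) of decorated trees; [] is the unit *)
definition basis_ok :: "'a set \<Rightarrow> 'a dtree list \<Rightarrow> bool" where
  "basis_ok A xs \<longleftrightarrow> (\<forall>x\<in>set xs. dtree_ok A x)"

definition seen_word :: "ptree \<Rightarrow> 'a list \<Rightarrow> path set \<Rightarrow> 'a list" where
  "seen_word t w V = [w ! j. j \<leftarrow> [0..<length w], \<exists>v\<in>V. sees t v j]"

definition admissible_cuts :: "ptree \<Rightarrow> path set set" where
  "admissible_cuts t = {c. c \<subseteq> internal t \<and>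
     (\<forall>l\<in>set (leafpaths t). card {v\<in>c. prefix v l} \<le> 1)}"

fun rcut :: "path set \<Rightarrow> ptree \<Rightarrow> ptree"
and rcuts :: "nat \<Rightarrow> path set \<Rightarrow> ptree list \<Rightarrow> ptree list" where
  "rcut c Leaf = Leaf"
| "rcut c (Node ts) = (if [] \<in> c then Leaf else Node (rcuts 0 c ts))"
| "rcuts k c [] = []"
| "rcuts k c (s # ss) = rcut {p. k # p \<in> c} s # rcuts (Suc k) c ss"

definition Rc :: "path set \<Rightarrow> 'a dtree \<Rightarrow> 'a dtree" where
  "Rc c x = (rcut c (fst x),
             seen_word (fst x) (snd x) {u \<in> internal (fst x). \<not> (\<exists>v\<in>c. prefix v u)})"

(* P^c(T): left-to-right (lexicographic order of paths) product of the cut subtrees *)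
definition Pc :: "path set \<Rightarrow> 'a dtree \<Rightarrow> 'a dtree list" where
  "Pc c x = map (\<lambda>v. (the (sub (fst x) v),
                       seen_word (fst x) (snd x) {u \<in> internal (fst x). prefix v u}))
               (sorted_list_of_set c)"

(* a tree reduced to a single leaf (weight 0) is identified with the unit 1 *)
definition norm :: "'a dtree list \<Rightarrow> 'a dtree list" where
  "norm xs = filter (\<lambda>x. fst x \<noteq> Leaf) xs"

definition admissible_cuts_plus :: "ptree \<Rightarrow> path set set" where
  "admissible_cuts_plus t = {c \<in> admissible_cuts t.
      \<not> (\<exists>v\<in>c. prefix v (last (leafpaths t)))}"

(* (f \<prec> g)(x) = m (f \<otimes> g) \<Delta>^+_\<prec>(x), with
   \<Delta>^+_\<prec>(x_1...x_s) = \<Delta>^+_\<prec>(x_1) \<Delta>(x_2...x_s), (f \<prec> g)(1) = 0 *)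
definition prec :: "('a dtree list \<Rightarrow> complex) \<Rightarrow> ('a dtree list \<Rightarrow> complex)
                     \<Rightarrow> 'a dtree list \<Rightarrow> complex" where
  "prec f g xs = (case xs of [] \<Rightarrow> 0
     | x # ys \<Rightarrow>
        (\<Sum>c\<in>admissible_cuts_plus (fst x).
          \<Sum>cs\<in>listset (map (\<lambda>y. admissible_cuts (fst y)) ys).
            f (norm (Rc c x # map2 Rc cs ys)) * g (Pc c x @ concat (map2 Pc cs ys))))"

definition eps :: "'a dtree list \<Rightarrow> complex" where
  "eps xs = (if xs = [] then 1 else 0)"

definition phi_ext :: "('a list \<Rightarrow> complex) \<Rightarrow> 'a dtree \<Rightarrow> complex" where
  "phi_ext \<phi> x = (if corolla (fst x) then \<phi> (snd x) else 0)"

definition kappa :: "('a list \<Rightarrow> complex) \<Rightarrow> 'a dtree list \<Rightarrow> complex" where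
  "kappa \<phi> xs = (case xs of
      [x] \<Rightarrow> (if fst x \<in> PST (length (snd x))
              then (-1) ^ (ninternal (fst x) - 1) *
                   (\<Prod>v\<in>internal (fst x). \<phi> (seen_word (fst x) (snd x) {v}))
              else 0)
    | _ \<Rightarrow> 0)"

end

theory Submission
  imports Defs
begin

text \<open>
  Listing, for each sector, the internal vertex that sees it gives a word of vertices whose set is the
  set of internal vertices; every seen word is the subword of the decoration selected by a set of
  vertices. Since \<open>\<Phi>\<close> vanishes on non-corollas, \<open>\<Phi>(P\<^sup>c(T))\<close> kills every cut containing a
  vertex that is not a fringe vertex (one all of whose children are leaves), and cuts of fringe
  vertices on the rightmost branch are not allowed. Cutting a set \<open>c\<close> of the remaining fringe
  vertices keeps primality and the words seen by the other vertices, so the term of \<open>c\<close> is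
  \<open>(-1)\<^bsup>|c|\<^esup>\<close> times the term of the empty cut. The alternating sum over all such \<open>c\<close>
  vanishes unless there are none, which for a prime tree happens exactly when it is a corolla.
  On a product \<open>T\<^sub>1 \<cdots> T\<^sub>s\<close> the cuts of \<open>T\<^sub>2, \<dots>, T\<^sub>s\<close> must be total because \<open>\<kappa>\<close>
  vanishes on products, which leaves \<open>\<Phi>(T\<^sub>1) \<Phi>(T\<^sub>2 \<cdots> T\<^sub>s)\<close>.
\<close>

lemma sum_Pow_alternating:
  "finite F \<Longrightarrow> (\<Sum>c\<in>Pow F. (-1::'a::comm_ring_1) ^ card c) = (if F = {} then 1 else 0)"
  using prod_diff_conv_sum[of F "\<lambda>_. 1" "\<lambda>_. 1", symmetric] by (simp add: power_0_left)

lemma minus_one_power_diff: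
  assumes "k \<le> n"
  shows "(-1::'a::comm_ring_1) ^ (n - k) = (-1) ^ n * (-1) ^ k"
proof -
  have "(-1::'a) ^ k * (-1) ^ k = 1"
    by (simp flip: power_mult_distrib)
  moreover have "(-1::'a) ^ n = (-1) ^ (n - k) * (-1) ^ k"
    using assms by (simp flip: power_add)
  ultimately show ?thesis
    by (simp add: mult.assoc)
qed

section \<open>Sectors and the vertices seeing them\<close>

text \<open>\<open>sector_vertices t ! j\<close> is the vertex seeing sector \<open>j\<close>: the root sees exactly the sectors
  between the subtrees of consecutive children.\<close>

fun sector_vertices :: "ptree \<Rightarrow> path list"
and sector_verticess :: "nat \<Rightarrow> ptree list \<Rightarrow> path list" where
  "sector_vertices Leaf = []"
| "sector_vertices (Node ts) = sector_verticess 0 ts"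
| "sector_verticess k [] = []"
| "sector_verticess k [s] = map ((#) k) (sector_vertices s)"
| "sector_verticess k (s # s' # ss) =
     map ((#) k) (sector_vertices s) @ [] # sector_verticess (Suc k) (s' # ss)"

definition consecutive_pairs :: "'a list \<Rightarrow> ('a \<times> 'a) list" where
  "consecutive_pairs xs = zip xs (tl xs)"

lemma consecutive_pairs_append:
  "xs \<noteq> [] \<Longrightarrow> ys \<noteq> [] \<Longrightarrow>
   consecutive_pairs (xs @ ys) = consecutive_pairs xs @ (last xs, hd ys) # consecutive_pairs ys"
  by (induction xs rule: induct_list012) (auto simp: consecutive_pairs_def neq_Nil_conv)

lemma consecutive_pairs_map:
  "consecutive_pairs (map f xs) = map (\<lambda>(a, b). (f a, f b)) (consecutive_pairs xs)"
  by (induction xs rule: induct_list012) (auto simp: consecutive_pairs_def)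

lemma length_consecutive_pairs: "length (consecutive_pairs xs) = length xs - 1"
  by (simp add: consecutive_pairs_def)

definition is_lca :: "path \<times> path \<Rightarrow> path \<Rightarrow> bool" where
  "is_lca ab s \<longleftrightarrow> (\<forall>v. prefix v (fst ab) \<and> prefix v (snd ab) \<longleftrightarrow> prefix v s)"

lemma is_lca_Cons: "is_lca (a, b) s \<Longrightarrow> is_lca (k # a, k # b) (k # s)"
  unfolding is_lca_def by (auto simp: prefix_Cons)

lemma is_lca_distinct_heads: "k \<noteq> k' \<Longrightarrow> is_lca (k # a, k' # b) []"
  unfolding is_lca_def by (auto simp: prefix_Cons)

lemma leafpathss_sector_verticess:
  assumes "ts \<noteq> []"
    and "\<And>s. s \<in> set ts \<Longrightarrow>
           leafpaths s \<noteq> [] \<and> list_all2 is_lca (consecutive_pairs (leafpaths s)) (sector_vertices s)"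
  shows "(\<exists>p. hd (leafpathss k ts) = k # p) \<and>
    list_all2 is_lca (consecutive_pairs (leafpathss k ts)) (sector_verticess k ts)"
  using assms
proof (induction ts arbitrary: k rule: induct_list012)
  case (2 s)
  then show ?case
    by (auto simp: consecutive_pairs_map list_all2_map1 list_all2_map2 hd_map neq_Nil_conv
        intro!: is_lca_Cons elim!: list_all2_mono)
next
  case (3 s s' ss)
  have s: "leafpaths s \<noteq> []" "list_all2 is_lca (consecutive_pairs (leafpaths s)) (sector_vertices s)"
    using "3.prems"(2) by auto
  obtain p where p: "hd (leafpathss (Suc k) (s' # ss)) = Suc k # p"
    and rest: "list_all2 is_lca (consecutive_pairs (leafpathss (Suc k) (s' # ss)))
                 (sector_verticess (Suc k) (s' # ss))"
    using "3.IH"(2)[of "Suc k"] "3.prems"(2) by auto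
  have "leafpathss (Suc k) (s' # ss) \<noteq> []"
    using "3.prems"(2)[of s'] by simp
  moreover have "list_all2 is_lca (consecutive_pairs (map ((#) k) (leafpaths s)))
      (map ((#) k) (sector_vertices s))"
    using s by (auto simp: consecutive_pairs_map list_all2_map1 list_all2_map2
        intro!: is_lca_Cons elim!: list_all2_mono)
  moreover have "leafpathss k (s # s' # ss) = map ((#) k) (leafpaths s) @ leafpathss (Suc k) (s' # ss)"
    "sector_verticess k (s # s' # ss) =
       map ((#) k) (sector_vertices s) @ [] # sector_verticess (Suc k) (s' # ss)"
    by simp_all
  ultimately show ?case
    using s rest
    by (simp del: leafpathss.simps sector_verticess.simps
        add: consecutive_pairs_append last_map hd_map p is_lca_distinct_heads list_all2_appendI)
qed simp

lemma leafpaths_sector_vertices: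
  "reduced t \<Longrightarrow>
   leafpaths t \<noteq> [] \<and> list_all2 is_lca (consecutive_pairs (leafpaths t)) (sector_vertices t)"
proof (induction t)
  case (Node ts)
  then have "ts \<noteq> []" by auto
  with Node leafpathss_sector_verticess[of ts 0] show ?case
    by (cases ts) auto
qed (simp add: consecutive_pairs_def)

lemma nleaves_sector_vertices: "reduced t \<Longrightarrow> nleaves t = Suc (length (sector_vertices t))"
  using leafpaths_sector_vertices[of t]
  by (cases "leafpaths t")
     (auto simp: nleaves_def length_consecutive_pairs dest!: list_all2_lengthD)

lemma common_prefix_iff_prefix_sector_vertex:
  assumes "reduced t" and "j < length (sector_vertices t)"
  shows "prefix v (leafpaths t ! j) \<and> prefix v (leafpaths t ! Suc j) \<longleftrightarrow>
         prefix v (sector_vertices t ! j)"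
proof -
  have lca: "list_all2 is_lca (consecutive_pairs (leafpaths t)) (sector_vertices t)"
    using leafpaths_sector_vertices[OF assms(1)] by blast
  then have "is_lca (consecutive_pairs (leafpaths t) ! j) (sector_vertices t ! j)"
    using assms(2) by (auto dest: list_all2_nthD2)
  moreover have "consecutive_pairs (leafpaths t) ! j = (leafpaths t ! j, leafpaths t ! Suc j)"
    using assms(2) list_all2_lengthD[OF lca] by (auto simp: consecutive_pairs_def nth_tl)
  ultimately show ?thesis by (simp add: is_lca_def)
qed

lemma internal_Leaf [simp]: "internal Leaf = {}"
proof -
  have "sub Leaf p \<noteq> Some (Node ts)" for p ts by (cases p) auto
  then show ?thesis by (auto simp: internal_def)
qed

lemma Nil_in_internal_Node [simp]: "[] \<in> internal (Node ts)"
  by (simp add: internal_def)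

lemma internal_Node:
  "p \<in> internal (Node ts) \<longleftrightarrow> p = [] \<or> (\<exists>i<length ts. \<exists>q. p = i # q \<and> q \<in> internal (ts ! i))"
  by (cases p) (auto simp: internal_def)

lemma internal_eq_empty_iff: "internal s = {} \<longleftrightarrow> s = Leaf"
  by (metis Nil_in_internal_Node empty_iff internal_Leaf ptree.exhaust)

lemma set_sector_verticess:
  "p \<in> set (sector_verticess k ts) \<longleftrightarrow>
   (p = [] \<and> 2 \<le> length ts) \<or>
   (\<exists>i<length ts. \<exists>q. p = (k + i) # q \<and> q \<in> set (sector_vertices (ts ! i)))"
proof (induction ts arbitrary: k rule: induct_list012)
  case (3 s s' ss)
  show ?case
    using "3.IH"(2)[of "Suc k"] by (auto simp: Ex_less_Suc2)
qed auto

lemma set_sector_vertices: "reduced t \<Longrightarrow> set (sector_vertices t) = internal t"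
proof (induction t)
  case (Node ts)
  then have "\<forall>i<length ts. set (sector_vertices (ts ! i)) = internal (ts ! i)" by auto
  with Node.prems show ?case
    by (auto simp: set_eq_iff set_sector_verticess internal_Node)
qed simp

lemma finite_internal: "reduced t \<Longrightarrow> finite (internal t)"
  by (metis List.finite_set set_sector_vertices)

lemma sees_iff_sector_vertex:
  assumes "reduced t"
  shows "sees t v j \<longleftrightarrow> j < length (sector_vertices t) \<and> v = sector_vertices t ! j"
proof (cases "j < length (sector_vertices t)")
  case True
  let ?a = "leafpaths t ! j" and ?b = "leafpaths t ! Suc j" and ?s = "sector_vertices t ! j"
  have s: "?s \<in> internal t"
    using set_sector_vertices[OF assms] True nth_mem by blast
  have "sees t v j \<longleftrightarrow>
      v \<in> internal t \<and> (prefix v ?a \<and> prefix v ?b) \<and> (\<forall>u. prefix u ?a \<and> prefix u ?b \<longrightarrow> prefix u v)"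
    using True nleaves_sector_vertices[OF assms] by (simp add: sees_def)
  also have "\<dots> \<longleftrightarrow> v \<in> internal t \<and> prefix v ?s \<and> (\<forall>u. prefix u ?s \<longrightarrow> prefix u v)"
    by (simp only: common_prefix_iff_prefix_sector_vertex[OF assms True])
  also have "\<dots> \<longleftrightarrow> v = ?s"
    using s prefix_order.antisym by blast
  finally show ?thesis
    using True by simp
qed (simp add: sees_def nleaves_sector_vertices[OF assms])

definition select_letters :: "'b list \<Rightarrow> ('b \<Rightarrow> bool) \<Rightarrow> 'a list \<Rightarrow> 'a list" where
  "select_letters S P w = map fst (filter (\<lambda>p. P (snd p)) (zip w S))"

lemma length_select_letters:
  "length w = length S \<Longrightarrow> length (select_letters S P w) = length (filter P S)"
  by (induction w S rule: list_induct2) (auto simp: select_letters_def)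

lemma set_select_letters: "set (select_letters S P w) \<subseteq> set w"
  by (auto simp: select_letters_def dest: set_zip_leftD)

lemma select_letters_all:
  "length w = length S \<Longrightarrow> (\<And>x. x \<in> set S \<Longrightarrow> P x) \<Longrightarrow> select_letters S P w = w"
  by (induction w S rule: list_induct2) (auto simp: select_letters_def)

lemma select_letters_cong:
  "(\<And>x. x \<in> set S \<Longrightarrow> P x \<longleftrightarrow> Q x) \<Longrightarrow> select_letters S P w = select_letters S Q w"
  unfolding select_letters_def
  by (intro arg_cong[where f = "map fst"] filter_cong) (auto dest: set_zip_rightD)

lemma select_letters_select_letters:
  "length w = length S \<Longrightarrow>
   select_letters (filter P S) Q (select_letters S P w) = select_letters S (\<lambda>x. P x \<and> Q x) w"
  by (induction w S rule: list_induct2) (auto simp: select_letters_def)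

lemma seen_word_eq_select_letters:
  assumes "reduced t" and "length w = length (sector_vertices t)"
  shows "seen_word t w V = select_letters (sector_vertices t) (\<lambda>v. v \<in> V) w"
proof -
  let ?S = "sector_vertices t"
  have "filter (\<lambda>j. \<exists>v\<in>V. sees t v j) [0..<length w] = filter (\<lambda>j. ?S ! j \<in> V) [0..<length w]"
    using assms by (intro filter_cong) (auto simp: sees_iff_sector_vertex)
  moreover have "zip w ?S = map (\<lambda>j. (w ! j, ?S ! j)) [0..<length w]"
    using assms(2) by (intro nth_equalityI) auto
  moreover have "[w ! j. j \<leftarrow> xs, P j] = map ((!) w) (filter P xs)" for xs P
    by (induction xs) auto
  ultimately show ?thesis
    by (simp add: seen_word_def select_letters_def filter_map o_def)
qed

section \<open>Subtrees and the pieces of a cut\<close>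

lemma two_le_nleaves_Node:
  assumes "reduced (Node ts)"
  shows "2 \<le> nleaves (Node ts)"
proof -
  have "[] \<in> set (sector_vertices (Node ts))"
    using set_sector_vertices[OF assms] by simp
  then show ?thesis
    using nleaves_sector_vertices[OF assms] by (cases "sector_vertices (Node ts)") auto
qed

lemma sub_append: "sub t (p @ q) = (case sub t p of None \<Rightarrow> None | Some s \<Rightarrow> sub s q)"
proof (induction p arbitrary: t)
  case (Cons k p)
  then show ?case by (cases t) auto
qed simp

lemma reduced_sub: "reduced t \<Longrightarrow> sub t p = Some s \<Longrightarrow> reduced s"
proof (induction p arbitrary: t)
  case (Cons k p)
  then show ?case by (cases t) (auto split: if_splits intro: Cons.IH[of "_ ! k"])
qed simp

lemma filter_prefix_Cons_map_Cons:
  "filter (prefix (k # v)) (map ((#) j) xs) = (if j = k then map ((#) k) (filter (prefix v) xs) else [])"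
  by (induction xs) auto

lemma filter_prefix_sector_verticess:
  "filter (prefix (k # v)) (sector_verticess m ts) =
   (if m \<le> k \<and> k < m + length ts
    then map ((#) k) (filter (prefix v) (sector_vertices (ts ! (k - m)))) else [])"
proof (induction ts arbitrary: m rule: induct_list012)
  case (3 s s' ss)
  have "k - m = Suc n \<Longrightarrow> k - Suc m = n" for n by arith
  then show ?case
    using "3.IH"(2)[of "Suc m"]
    by (cases "k - m") (auto simp: filter_prefix_Cons_map_Cons Suc_diff_le)
qed (auto simp: filter_prefix_Cons_map_Cons)

lemma filter_prefix_sector_vertices:
  "sub t v = Some s \<Longrightarrow> filter (prefix v) (sector_vertices t) = map ((@) v) (sector_vertices s)"
proof (induction v arbitrary: t)
  case (Cons k v)
  then obtain ts where "t = Node ts" "k < length ts" "sub (ts ! k) v = Some s"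
    by (cases t) (auto split: if_splits)
  with Cons.IH show ?case
    by (simp add: filter_prefix_sector_verticess)
qed (simp add: map_idI)

definition piece :: "'a dtree \<Rightarrow> path \<Rightarrow> 'a dtree" where
  "piece x v = (the (sub (fst x) v), seen_word (fst x) (snd x) {u \<in> internal (fst x). prefix v u})"

lemma Pc_eq_map_piece: "Pc c x = map (piece x) (sorted_list_of_set c)"
  by (simp add: Pc_def piece_def)

lemma dtree_ok_reduced_length:
  "dtree_ok A (t, w) \<Longrightarrow> reduced t \<and> length w = length (sector_vertices t)"
  by (auto simp: dtree_ok_def weight_def nleaves_sector_vertices)

lemma dtree_ok_piece:
  assumes x: "dtree_ok A (t, w)" and v: "v \<in> internal t"
  shows "dtree_ok A (piece (t, w) v)"
proof -
  from x have r: "reduced t" and l: "length w = length (sector_vertices t)"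
    by (auto dest: dtree_ok_reduced_length)
  from v obtain ts where s: "sub t v = Some (Node ts)"
    by (auto simp: internal_def)
  have rs: "reduced (Node ts)"
    using reduced_sub[OF r s] .
  have word: "seen_word t w {u \<in> internal t. prefix v u} = select_letters (sector_vertices t) (prefix v) w"
    unfolding seen_word_eq_select_letters[OF r l]
    by (rule select_letters_cong) (use set_sector_vertices[OF r] in auto)
  have "length (select_letters (sector_vertices t) (prefix v) w) = length (sector_vertices (Node ts))"
    using length_select_letters[OF l] filter_prefix_sector_vertices[OF s] by simp
  then show ?thesis
    using x rs s two_le_nleaves_Node[OF rs] nleaves_sector_vertices[OF rs]
      set_select_letters[of "sector_vertices t" "prefix v" w]
    by (auto simp: dtree_ok_def weight_def piece_def word)
qed

lemma basis_ok_Pc: "dtree_ok A (t, w) \<Longrightarrow> c \<subseteq> internal t \<Longrightarrow> basis_ok A (Pc c (t, w))"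
  using finite_internal dtree_ok_reduced_length finite_subset dtree_ok_piece
  by (fastforce simp: Pc_eq_map_piece basis_ok_def)

lemma piece_root:
  assumes "dtree_ok A x"
  shows "piece x [] = x"
proof -
  obtain t w where x: "x = (t, w)" by (cases x)
  with assms have r: "reduced t" and l: "length w = length (sector_vertices t)"
    by (auto dest: dtree_ok_reduced_length)
  have "seen_word t w {u \<in> internal t. prefix [] u} = w"
    unfolding seen_word_eq_select_letters[OF r l]
    by (rule select_letters_all[OF l]) (use set_sector_vertices[OF r] in auto)
  then show ?thesis by (simp add: piece_def x)
qed

section \<open>The trunk of a cut\<close>

definition uncut :: "path set \<Rightarrow> path \<Rightarrow> bool" where
  "uncut c u \<longleftrightarrow> \<not> (\<exists>v\<in>c. prefix v u)"

lemma uncut_Cons: "[] \<notin> c \<Longrightarrow> uncut c (j # u) \<longleftrightarrow> uncut {p. j # p \<in> c} u"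
  unfolding uncut_def by (metis (mono_tags, lifting) mem_Collect_eq prefix_Cons)

lemma uncut_Nil: "uncut c [] \<longleftrightarrow> [] \<notin> c"
  by (auto simp: uncut_def)

lemma length_rcuts [simp]: "length (rcuts k c ts) = length ts"
  by (induction ts arbitrary: k) auto

lemma sector_vertices_rcut: "sector_vertices (rcut c t) = filter (uncut c) (sector_vertices t)"
proof (induction t arbitrary: c)
  case (Node ts)
  show ?case
  proof (cases "[] \<in> c")
    case True
    then have "\<not> uncut c u" for u
      unfolding uncut_def using Nil_prefix by blast
    with True show ?thesis by simp
  next
    case False
    have "sector_verticess k (rcuts k c ts) = filter (uncut c) (sector_verticess k ts)" for k
      using Node.IH
      by (induction ts arbitrary: k rule: induct_list012)
         (simp_all add: filter_map o_def uncut_Cons[OF False] uncut_Nil False)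
    with False show ?thesis by simp
  qed
qed simp

lemma reduced_rcut: "reduced t \<Longrightarrow> reduced (rcut c t)"
proof (induction t arbitrary: c)
  case (Node ts)
  have "set us \<subseteq> set ts \<Longrightarrow> \<forall>s\<in>set (rcuts k c us). reduced s" for us k
    by (induction us arbitrary: k) (use Node in auto)
  with Node.prems show ?case by auto
qed simp

lemma internal_rcut: "reduced t \<Longrightarrow> internal (rcut c t) = {u \<in> internal t. uncut c u}"
  by (simp add: set_sector_vertices[symmetric] reduced_rcut sector_vertices_rcut)

lemma snd_Rc:
  assumes "reduced t" and "length w = length (sector_vertices t)"
  shows "snd (Rc c (t, w)) = select_letters (sector_vertices t) (uncut c) w"
  unfolding Rc_def snd_conv fst_conv seen_word_eq_select_letters[OF assms]
  by (rule select_letters_cong) (use set_sector_vertices[OF assms(1)] in \<open>auto simp: uncut_def\<close>)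

lemma length_snd_Rc:
  "reduced t \<Longrightarrow> length w = length (sector_vertices t) \<Longrightarrow>
   length (snd (Rc c (t, w))) = length (sector_vertices (rcut c t))"
  by (simp add: snd_Rc length_select_letters sector_vertices_rcut)

lemma seen_word_Rc:
  assumes "reduced t" and "length w = length (sector_vertices t)" and "uncut c v"
  shows "seen_word (rcut c t) (snd (Rc c (t, w))) {v} = seen_word t w {v}"
proof -
  let ?S = "sector_vertices t"
  have "seen_word (rcut c t) (snd (Rc c (t, w))) {v} =
      select_letters (filter (uncut c) ?S) (\<lambda>u. u \<in> {v}) (select_letters ?S (uncut c) w)"
    using seen_word_eq_select_letters[OF reduced_rcut[OF assms(1)] length_snd_Rc[OF assms(1,2)]]
    by (simp add: snd_Rc[OF assms(1,2)] sector_vertices_rcut)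
  also have "\<dots> = select_letters ?S (\<lambda>u. u \<in> {v}) w"
    unfolding select_letters_select_letters[OF assms(2)]
    by (rule select_letters_cong) (use assms(3) in auto)
  finally show ?thesis
    using seen_word_eq_select_letters[OF assms(1,2)] by simp
qed

lemma last_rcuts:
  "ts \<noteq> [] \<Longrightarrow> last (rcuts k c ts) = rcut {p. (k + length ts - 1) # p \<in> c} (last ts)"
proof (induction ts arbitrary: k)
  case (Cons a ts)
  then show ?case by (cases ts) auto
qed simp

lemma last_leafpathss:
  "ts \<noteq> [] \<Longrightarrow> \<forall>s\<in>set ts. leafpaths s \<noteq> [] \<Longrightarrow>
   last (leafpathss k ts) = (k + length ts - 1) # last (leafpaths (last ts))"
proof (induction ts arbitrary: k)
  case (Cons a ts)
  then show ?case
    by (cases ts) (auto simp: last_map)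
qed simp

lemma last_leafpaths_Node:
  assumes "reduced (Node ts)"
  shows "last (leafpaths (Node ts)) = (length ts - 1) # last (leafpaths (last ts))"
proof -
  have "ts \<noteq> []" and "\<forall>s\<in>set ts. leafpaths s \<noteq> []"
    using assms leafpaths_sector_vertices by auto
  then show ?thesis
    using last_leafpathss[of ts 0] by simp
qed

lemma prime_tree_Node_iff: "reduced (Node ts) \<Longrightarrow> prime_tree (Node ts) \<longleftrightarrow> last ts = Leaf"
  using two_le_nleaves_Node[of ts] by (auto simp: prime_tree_def)

lemma prime_tree_rcut:
  assumes "reduced (Node ts)" and "\<not> (\<exists>v\<in>c. prefix v (last (leafpaths (Node ts))))"
  shows "prime_tree (rcut c (Node ts)) \<longleftrightarrow> prime_tree (Node ts)"
proof -
  have ts: "ts \<noteq> []" and nil: "[] \<notin> c"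
    using assms by auto
  have "last (rcuts 0 c ts) = rcut {p. (length ts - 1) # p \<in> c} (last ts)"
    using last_rcuts[OF ts] by simp
  moreover have "[length ts - 1] \<notin> c"
    using assms last_leafpaths_Node[OF assms(1)] by auto
  ultimately have "last (rcuts 0 c ts) = Leaf \<longleftrightarrow> last ts = Leaf"
    by (cases "last ts") auto
  then show ?thesis
    using assms(1) reduced_rcut[OF assms(1), of c] nil
    by (simp add: prime_tree_Node_iff)
qed

section \<open>Fringe vertices and admissible cuts\<close>

lemma corolla_Node_iff: "corolla (Node ts) \<longleftrightarrow> (\<forall>s\<in>set ts. s = Leaf)"
proof -
  have "corolla (Node ts) \<longleftrightarrow> (\<forall>i<length ts. internal (ts ! i) = {})"
    unfolding corolla_def set_eq_iff internal_Node by fastforce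
  then show ?thesis
    by (metis in_set_conv_nth internal_eq_empty_iff)
qed

definition fringe :: "ptree \<Rightarrow> path set" where
  "fringe t = {v \<in> internal t. corolla (the (sub t v))}"

lemma fringe_subset_internal: "fringe t \<subseteq> internal t"
  by (auto simp: fringe_def)

lemma fringe_maximal: "v \<in> fringe t \<Longrightarrow> u \<in> internal t \<Longrightarrow> prefix v u \<Longrightarrow> u = v"
proof -
  assume v: "v \<in> fringe t" and u: "u \<in> internal t" and "prefix v u"
  then obtain q where q: "u = v @ q"
    by (auto simp: prefix_def)
  from v obtain s where s: "sub t v = Some s" "corolla s"
    by (auto simp: fringe_def internal_def)
  from u obtain ts where "sub t u = Some (Node ts)"
    by (auto simp: internal_def)
  with s q have "q \<in> internal s"
    by (simp add: internal_def sub_append)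
  with s(2) q show "u = v"
    by (simp add: corolla_def)
qed

lemma exists_fringe_below: "sub t u = Some s \<Longrightarrow> s \<noteq> Leaf \<Longrightarrow> \<exists>v. prefix u v \<and> v \<in> fringe t"
proof (induction s arbitrary: u)
  case (Node ts)
  show ?case
  proof (cases "\<forall>s\<in>set ts. s = Leaf")
    case True
    with Node.prems have "u \<in> fringe t"
      by (simp add: fringe_def internal_def corolla_Node_iff)
    then show ?thesis by blast
  next
    case False
    then obtain i where i: "i < length ts" "ts ! i \<noteq> Leaf"
      by (auto simp: in_set_conv_nth)
    with Node.prems have "sub t (u @ [i]) = Some (ts ! i)"
      by (simp add: sub_append)
    with Node.IH[OF nth_mem[OF i(1)] _ i(2)] show ?thesis
      using append_prefixD by blast
  qed
qed simp

lemma internal_uncut_fringe: "c \<subseteq> fringe t \<Longrightarrow> {u \<in> internal t. uncut c u} = internal t - c"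
  unfolding uncut_def using fringe_maximal by blast

text \<open>The spine is the path from the root to the rightmost leaf.\<close>

definition fringe_off_spine :: "ptree \<Rightarrow> path set" where
  "fringe_off_spine t = {v \<in> fringe t. \<not> prefix v (last (leafpaths t))}"

lemma Pow_fringe_off_spine_subset:
  assumes "reduced t"
  shows "Pow (fringe_off_spine t) \<subseteq> admissible_cuts_plus t"
proof
  fix c assume "c \<in> Pow (fringe_off_spine t)"
  then have cF: "c \<subseteq> fringe t" and spine: "\<not> (\<exists>v\<in>c. prefix v (last (leafpaths t)))"
    by (auto simp: fringe_off_spine_def)
  have cI: "c \<subseteq> internal t"
    using cF fringe_subset_internal by blast
  have "card {v \<in> c. prefix v l} \<le> 1" for l
  proof -
    have eq: "\<forall>a\<in>{v \<in> c. prefix v l}. \<forall>b\<in>{v \<in> c. prefix v l}. a = b"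
    proof (intro ballI)
      fix a b assume a: "a \<in> {v \<in> c. prefix v l}" and b: "b \<in> {v \<in> c. prefix v l}"
      then have "prefix a b \<or> prefix b a"
        using prefix_same_cases by blast
      moreover have "a \<in> fringe t" "b \<in> fringe t" "a \<in> internal t" "b \<in> internal t"
        using a b cF cI by auto
      ultimately show "a = b"
        using fringe_maximal[of a t b] fringe_maximal[of b t a] by auto
    qed
    have "finite {v \<in> c. prefix v l}"
      using finite_subset[OF cI finite_internal[OF assms]] by simp
    from card_le_Suc0_iff_eq[OF this] eq show ?thesis
      by simp
  qed
  with cI spine show "c \<in> admissible_cuts_plus t"
    unfolding admissible_cuts_plus_def admissible_cuts_def by blast
qed

lemma Nil_notin_admissible_cuts_plus: "c \<in> admissible_cuts_plus t \<Longrightarrow> [] \<notin> c"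
  by (auto simp: admissible_cuts_plus_def)

lemma finite_admissible_cuts: "reduced t \<Longrightarrow> finite (admissible_cuts t)"
  by (rule finite_subset[of _ "Pow (internal t)"]) (auto simp: admissible_cuts_def finite_internal)

lemma root_cut_admissible: "{[]} \<in> admissible_cuts (Node ts)"
proof -
  have "{v \<in> {[]}. prefix v l} = {[]}" for l :: path
    by auto
  then show ?thesis
    by (simp add: admissible_cuts_def)
qed

lemma leaf_below_internal:
  assumes "reduced t" and "v \<in> internal t"
  shows "\<exists>l\<in>set (leafpaths t). prefix v l"
proof -
  obtain j where j: "j < length (sector_vertices t)" "v = sector_vertices t ! j"
    using assms set_sector_vertices by (metis in_set_conv_nth)
  then have "prefix v (leafpaths t ! j)" and "j < length (leafpaths t)"
    using common_prefix_iff_prefix_sector_vertex[OF assms(1) j(1), of v]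
      nleaves_sector_vertices[OF assms(1)]
    by (auto simp: nleaves_def)
  then show ?thesis by auto
qed

lemma admissible_cut_with_root:
  assumes "reduced t" and c: "c \<in> admissible_cuts t" and "[] \<in> c"
  shows "c = {[]}"
proof (rule ccontr)
  assume "c \<noteq> {[]}"
  with assms obtain v where v: "v \<in> c" "v \<noteq> []" by blast
  with c have "v \<in> internal t"
    by (auto simp: admissible_cuts_def)
  then obtain l where l: "l \<in> set (leafpaths t)" "prefix v l"
    using leaf_below_internal[OF assms(1)] by blast
  have "finite {u \<in> c. prefix u l}"
    using c finite_internal[OF assms(1)] by (auto simp: admissible_cuts_def intro: finite_subset)
  moreover have "{[], v} \<subseteq> {u \<in> c. prefix u l}"
    using v l assms(3) by auto
  ultimately have "card {[], v} \<le> card {u \<in> c. prefix u l}"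
    by (rule card_mono)
  also have "\<dots> \<le> 1"
    using c l by (simp add: admissible_cuts_def)
  finally have "card {[], v} \<le> 1" .
  with v show False by simp
qed

lemma corolla_iff_prime_tree_no_fringe_off_spine:
  assumes r: "reduced (Node ts)"
  shows "corolla (Node ts) \<longleftrightarrow> prime_tree (Node ts) \<and> fringe_off_spine (Node ts) = {}"
proof
  assume cor: "corolla (Node ts)"
  have "ts \<noteq> []"
    using r by auto
  with cor have "last ts = Leaf"
    by (simp add: corolla_Node_iff)
  moreover have "fringe (Node ts) \<subseteq> {[]}"
    using cor fringe_subset_internal[of "Node ts"] by (simp add: corolla_def)
  then have "fringe_off_spine (Node ts) = {}"
    by (auto simp: fringe_off_spine_def)
  ultimately show "prime_tree (Node ts) \<and> fringe_off_spine (Node ts) = {}"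
    using r by (simp add: prime_tree_Node_iff)
next
  assume "prime_tree (Node ts) \<and> fringe_off_spine (Node ts) = {}"
  then have last: "last ts = Leaf" and no_fringe: "fringe_off_spine (Node ts) = {}"
    using r by (auto simp: prime_tree_Node_iff)
  have ts: "ts \<noteq> []"
    using r by auto
  show "corolla (Node ts)"
  proof (rule ccontr)
    assume "\<not> corolla (Node ts)"
    then obtain u ts' where u: "u \<noteq> []" "sub (Node ts) u = Some (Node ts')"
      by (auto simp: corolla_def internal_def)
    then obtain v where v: "prefix u v" "v \<in> fringe (Node ts)"
      using exists_fringe_below by blast
    with u have "v \<noteq> []"
      by auto
    moreover have "prefix v [length ts - 1]"
      using v(2) no_fringe last_leafpaths_Node[OF r] last by (auto simp: fringe_off_spine_def)
    ultimately have "v = [length ts - 1]"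
      by (cases v) auto
    moreover have "sub (Node ts) [length ts - 1] = Some Leaf"
      using ts last by (simp add: last_conv_nth)
    ultimately show False
      using v(2) by (simp add: fringe_def internal_def)
  qed
qed

lemma seen_word_corolla_root:
  assumes "reduced t" and "length w = length (sector_vertices t)" and "corolla t"
  shows "seen_word t w {[]} = w"
  unfolding seen_word_eq_select_letters[OF assms(1,2)]
  by (rule select_letters_all[OF assms(2)])
     (use assms set_sector_vertices[OF assms(1)] in \<open>auto simp: corolla_def\<close>)

section \<open>\<open>\<kappa>\<close> on the trunk of a cut\<close>

lemma kappa_single:
  "kappa \<phi> [x] =
    (if fst x \<in> PST (length (snd x))
     then (-1) ^ (ninternal (fst x) - 1) * (\<Prod>v\<in>internal (fst x). \<phi> (seen_word (fst x) (snd x) {v}))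
     else 0)"
  by (simp add: kappa_def)

lemma kappa_Cons_Cons: "kappa \<phi> (x # y # zs) = 0"
  by (simp add: kappa_def)

lemma kappa_Rc:
  assumes r: "reduced t" and l: "length w = length (sector_vertices t)"
    and c: "c \<in> admissible_cuts_plus t"
  shows "kappa \<phi> [Rc c (t, w)] =
    (if prime_tree t
     then (-1) ^ (card {u \<in> internal t. uncut c u} - 1) *
          (\<Prod>u | u \<in> internal t \<and> uncut c u. \<phi> (seen_word t w {u}))
     else 0)"
proof -
  let ?R = "rcut c t" and ?w = "snd (Rc c (t, w))"
  have R: "fst (Rc c (t, w)) = ?R"
    by (simp add: Rc_def)
  have "prime_tree ?R \<longleftrightarrow> prime_tree t"
  proof (cases t)
    case Leaf
    then show ?thesis by (simp add: prime_tree_def)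
  next
    case (Node ts)
    with r c prime_tree_rcut[of ts c] show ?thesis
      by (simp add: admissible_cuts_plus_def)
  qed
  moreover have "weight ?R = length ?w"
    using length_snd_Rc[OF r l] nleaves_sector_vertices[OF reduced_rcut[OF r]]
    by (simp add: weight_def)
  ultimately have "?R \<in> PST (length ?w) \<longleftrightarrow> prime_tree t"
    by (simp add: PST_def reduced_rcut[OF r])
  moreover have "(\<Prod>v\<in>internal ?R. \<phi> (seen_word ?R ?w {v})) =
      (\<Prod>u | u \<in> internal t \<and> uncut c u. \<phi> (seen_word t w {u}))"
    unfolding internal_rcut[OF r]
    using seen_word_Rc[OF r l] by (intro prod.cong) auto
  ultimately show ?thesis
    by (simp add: kappa_single R ninternal_def internal_rcut[OF r])
qed

section \<open>The left coproduct on products\<close>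

lemma listset_iff_list_all2: "cs \<in> listset As \<longleftrightarrow> list_all2 (\<in>) cs As"
proof (induction As arbitrary: cs)
  case (Cons a As)
  then show ?case by (cases cs) (auto simp: set_Cons_def)
qed auto

lemma finite_listset: "(\<And>A. A \<in> set As \<Longrightarrow> finite A) \<Longrightarrow> finite (listset As)"
proof (induction As)
  case (Cons a As)
  have "listset (a # As) \<subseteq> (\<lambda>(x, xs). x # xs) ` (a \<times> listset As)"
    by (auto simp: set_Cons_def)
  with Cons show ?case
    by (meson finite_SigmaI finite_imageI finite_subset list.set_intros)
qed simp

lemma dtree_ok_Node: "dtree_ok A (t, w) \<Longrightarrow> \<exists>ts. t = Node ts"
  by (cases t) (auto simp: dtree_ok_def weight_def nleaves_def)

lemma fst_Rc_eq_Leaf_iff: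
  assumes "dtree_ok A y" and "c \<in> admissible_cuts (fst y)"
  shows "fst (Rc c y) = Leaf \<longleftrightarrow> c = {[]}"
proof -
  obtain t w where y: "y = (t, w)" by (cases y)
  with assms obtain ts where t: "t = Node ts"
    using dtree_ok_Node by blast
  have "reduced t"
    using assms y dtree_ok_reduced_length by blast
  then have "[] \<in> c \<longleftrightarrow> c = {[]}"
    using admissible_cut_with_root[of t c] assms(2) y by auto
  then show ?thesis
    by (simp add: Rc_def y t)
qed

lemma fst_Rc_root: "fst (Rc {[]} y) = Leaf"
  by (cases "fst y") (simp_all add: Rc_def)

text \<open>Since \<open>f\<close> vanishes on products, the only cut of the factors \<open>ys\<close> that survives is the one
  cutting each factor at its root.\<close>

lemma sum_cuts_of_factors:
  fixes f g :: "'a dtree list \<Rightarrow> complex"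
  assumes f: "\<And>x y zs. f (x # y # zs) = 0"
    and ys: "\<And>y. y \<in> set ys \<Longrightarrow> dtree_ok A y" and r: "fst r \<noteq> Leaf"
  shows "(\<Sum>cs\<in>listset (map (\<lambda>y. admissible_cuts (fst y)) ys).
            f (norm (r # map2 Rc cs ys)) * g (p @ concat (map2 Pc cs ys))) = f [r] * g (p @ ys)"
proof -
  define LS where "LS = listset (map (\<lambda>y. admissible_cuts (fst y)) ys)"
  define roots where "roots = replicate (length ys) ({[]} :: path set)"
  have cuts: "cs \<in> LS \<longleftrightarrow>
      length cs = length ys \<and> (\<forall>i<length ys. cs ! i \<in> admissible_cuts (fst (ys ! i)))" for cs
    by (auto simp: LS_def listset_iff_list_all2 list_all2_conv_all_nth)
  have "finite (admissible_cuts (fst y))" if "y \<in> set ys" for y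
    using ys[OF that] dtree_ok_reduced_length finite_admissible_cuts by (metis prod.collapse)
  then have fin: "finite LS"
    unfolding LS_def by (intro finite_listset) auto
  have "{[]} \<in> admissible_cuts (fst y)" if "y \<in> set ys" for y
    using ys[OF that] dtree_ok_Node root_cut_admissible by (metis prod.collapse)
  then have roots: "roots \<in> LS"
    unfolding cuts roots_def by simp
  have "f (norm (r # map2 Rc cs ys)) = 0" if "cs \<in> LS - {roots}" for cs
  proof -
    from that have len: "length cs = length ys"
      and adm: "\<forall>i<length ys. cs ! i \<in> admissible_cuts (fst (ys ! i))"
      by (simp_all add: cuts)
    from that len obtain i where i: "i < length ys" "cs ! i \<noteq> {[]}"
      by (auto simp: roots_def list_eq_iff_nth_eq)
    then have "fst (map2 Rc cs ys ! i) \<noteq> Leaf"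
      using fst_Rc_eq_Leaf_iff[OF ys[OF nth_mem]] adm len by simp
    moreover have "i < length (map2 Rc cs ys)"
      using i len by simp
    ultimately have "norm (map2 Rc cs ys) \<noteq> []"
      unfolding norm_def filter_empty_conv using nth_mem by blast
    then obtain z zs where "norm (map2 Rc cs ys) = z # zs"
      by (cases "norm (map2 Rc cs ys)") auto
    with r show ?thesis
      by (simp add: norm_def f)
  qed
  then have "(\<Sum>cs\<in>LS - {roots}. f (norm (r # map2 Rc cs ys)) * g (p @ concat (map2 Pc cs ys))) = 0"
    by simp
  moreover have "norm (r # map2 Rc roots ys) = [r]"
    using r by (simp add: norm_def roots_def zip_replicate1 filter_empty_conv fst_Rc_root)
  moreover have "map2 Pc roots ys = map (\<lambda>y. [y]) ys"
    using piece_root[OF ys] by (simp add: roots_def zip_replicate1 Pc_eq_map_piece)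
  ultimately show ?thesis
    unfolding LS_def[symmetric] sum.remove[OF fin roots] by simp
qed

lemma prec_Cons:
  assumes f: "\<And>x y zs. f (x # y # zs) = 0" and b: "basis_ok A (x # ys)"
  shows "prec f g (x # ys) = (\<Sum>c\<in>admissible_cuts_plus (fst x). f [Rc c x] * g (Pc c x @ ys))"
  unfolding prec_def list.case
proof (rule sum.cong[OF refl])
  fix c assume c: "c \<in> admissible_cuts_plus (fst x)"
  then have "c \<noteq> {[]}" and "c \<in> admissible_cuts (fst x)"
    using Nil_notin_admissible_cuts_plus by (auto simp: admissible_cuts_plus_def)
  with b have "fst (Rc c x) \<noteq> Leaf"
    using fst_Rc_eq_Leaf_iff[of A x c] by (simp add: basis_ok_def)
  with f b show "(\<Sum>cs\<in>listset (map (\<lambda>y. admissible_cuts (fst y)) ys).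
      f (norm (Rc c x # map2 Rc cs ys)) * g (Pc c x @ concat (map2 Pc cs ys))) =
    f [Rc c x] * g (Pc c x @ ys)"
    by (intro sum_cuts_of_factors) (auto simp: basis_ok_def)
qed

section \<open>Characters extending \<open>\<phi>\<close>\<close>

locale phi_character =
  fixes A :: "'a set" and \<phi> :: "'a list \<Rightarrow> complex" and \<Phi> :: "'a dtree list \<Rightarrow> complex"
  assumes Phi_Nil: "\<Phi> [] = 1"
    and Phi_append: "basis_ok A xs \<Longrightarrow> basis_ok A ys \<Longrightarrow> \<Phi> (xs @ ys) = \<Phi> xs * \<Phi> ys"
    and Phi_single: "dtree_ok A x \<Longrightarrow> \<Phi> [x] = phi_ext \<phi> x"
begin

lemma Phi_eq_prod_list: "basis_ok A xs \<Longrightarrow> \<Phi> xs = (\<Prod>x\<leftarrow>xs. \<Phi> [x])"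
proof (induction xs)
  case (Cons x xs)
  then show ?case
    using Phi_append[of "[x]" xs] by (simp add: basis_ok_def)
qed (simp add: Phi_Nil)

lemma Phi_piece:
  assumes x: "dtree_ok A (t, w)" and v: "v \<in> internal t"
  shows "\<Phi> [piece (t, w) v] = (if v \<in> fringe t then \<phi> (seen_word t w {v}) else 0)"
proof -
  have "\<Phi> [piece (t, w) v] = phi_ext \<phi> (piece (t, w) v)"
    using Phi_single dtree_ok_piece[OF x v] .
  moreover have "{u \<in> internal t. prefix v u} = {v}" if "v \<in> fringe t"
    using fringe_maximal[OF that] v by auto
  ultimately show ?thesis
    using v by (simp add: piece_def phi_ext_def fringe_def)
qed

lemma Phi_Pc:
  assumes x: "dtree_ok A (t, w)" and c: "c \<subseteq> internal t"
  shows "\<Phi> (Pc c (t, w)) = (\<Prod>v\<in>c. if v \<in> fringe t then \<phi> (seen_word t w {v}) else 0)"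
proof -
  have "finite c"
    using c finite_internal dtree_ok_reduced_length[OF x] finite_subset by blast
  then have "\<Phi> (Pc c (t, w)) = (\<Prod>v\<in>c. \<Phi> [piece (t, w) v])"
    using Phi_eq_prod_list[OF basis_ok_Pc[OF x c]]
      prod.distinct_set_conv_list[of "sorted_list_of_set c" "\<lambda>v. \<Phi> [piece (t, w) v]"]
    by (simp add: Pc_eq_map_piece o_def)
  also have "\<dots> = (\<Prod>v\<in>c. if v \<in> fringe t then \<phi> (seen_word t w {v}) else 0)"
    using Phi_piece[OF x] c by (intro prod.cong) auto
  finally show ?thesis .
qed

lemma Phi_Pc_eq_0:
  assumes x: "dtree_ok A (t, w)" and c: "c \<subseteq> internal t" "\<not> c \<subseteq> fringe t"
  shows "\<Phi> (Pc c (t, w)) = 0"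
proof -
  obtain v where "v \<in> c" "v \<notin> fringe t"
    using c(2) by blast
  moreover have "finite c"
    using c finite_internal dtree_ok_reduced_length[OF x] finite_subset by blast
  ultimately show ?thesis
    unfolding Phi_Pc[OF x c(1)] by (force simp: prod_zero_iff)
qed

lemma cut_term_off_spine:
  assumes x: "dtree_ok A (t, w)" and c: "c \<subseteq> fringe_off_spine t"
  shows "kappa \<phi> [Rc c (t, w)] * \<Phi> (Pc c (t, w)) =
    (if prime_tree t then (-1) ^ (ninternal t - 1) * (\<Prod>v\<in>internal t. \<phi> (seen_word t w {v})) else 0) *
    (-1) ^ card c"
proof -
  obtain r: "reduced t" and l: "length w = length (sector_vertices t)"
    using dtree_ok_reduced_length[OF x] by blast
  obtain ts where t: "t = Node ts"
    using dtree_ok_Node[OF x] by blast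
  let ?I = "internal t" and ?g = "\<lambda>v. \<phi> (seen_word t w {v})"
  have cF: "c \<subseteq> fringe t" and cI: "c \<subseteq> ?I" and nil: "[] \<notin> c"
    using c fringe_subset_internal by (auto simp: fringe_off_spine_def)
  have fin: "finite ?I"
    using finite_internal[OF r] .
  have "c \<in> admissible_cuts_plus t"
    using Pow_fringe_off_spine_subset[OF r] c by blast
  then have kappa: "kappa \<phi> [Rc c (t, w)] =
      (if prime_tree t then (-1) ^ (card (?I - c) - 1) * (\<Prod>v\<in>?I - c. ?g v) else 0)"
    using kappa_Rc[OF r l] internal_uncut_fringe[OF cF] by (simp add: Collect_conj_eq[symmetric])
  have Phi: "\<Phi> (Pc c (t, w)) = (\<Prod>v\<in>c. ?g v)"
    unfolding Phi_Pc[OF x cI] using cF by (intro prod.cong) auto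
  have "card c \<le> card ?I - 1"
    using card_mono[OF fin, of "insert [] c"] cI nil fin t
    by (simp add: finite_subset)
  moreover have "card (?I - c) - 1 = card ?I - 1 - card c"
    using card_Diff_subset[OF finite_subset[OF cI fin] cI] by simp
  ultimately have sign: "(-1::complex) ^ (card (?I - c) - 1) = (-1) ^ (card ?I - 1) * (-1) ^ card c"
    using minus_one_power_diff by metis
  have "(\<Prod>v\<in>?I - c. ?g v) * (\<Prod>v\<in>c. ?g v) = (\<Prod>v\<in>?I. ?g v)"
    using prod.subset_diff[OF cI fin, of ?g] by simp
  with kappa Phi sign show ?thesis
    by (simp add: ninternal_def algebra_simps)
qed

lemma sum_admissible_cuts_plus:
  assumes x: "dtree_ok A (t, w)"
  shows "(\<Sum>c\<in>admissible_cuts_plus t. kappa \<phi> [Rc c (t, w)] * \<Phi> (Pc c (t, w))) = phi_ext \<phi> (t, w)"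
proof -
  obtain r: "reduced t" and l: "length w = length (sector_vertices t)"
    using dtree_ok_reduced_length[OF x] by blast
  obtain ts where t: "t = Node ts"
    using dtree_ok_Node[OF x] by blast
  let ?F = "fringe_off_spine t"
  define K where "K = (if prime_tree t
    then (-1::complex) ^ (ninternal t - 1) * (\<Prod>v\<in>internal t. \<phi> (seen_word t w {v})) else 0)"
  have adm_internal: "c \<subseteq> internal t" if "c \<in> admissible_cuts_plus t" for c
    using that by (auto simp: admissible_cuts_plus_def admissible_cuts_def)
  have fin_adm: "finite (admissible_cuts_plus t)"
    using adm_internal finite_internal[OF r] by (meson Pow_iff finite_Pow_iff finite_subset subsetI)
  have "?F \<subseteq> internal t"
    using fringe_subset_internal by (auto simp: fringe_off_spine_def)
  then have fin_F: "finite ?F"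
    using finite_internal[OF r] finite_subset by blast
  have "\<Phi> (Pc c (t, w)) = 0" if c: "c \<in> admissible_cuts_plus t - Pow ?F" for c
  proof (rule Phi_Pc_eq_0[OF x])
    show "c \<subseteq> internal t"
      using c adm_internal by blast
    show "\<not> c \<subseteq> fringe t"
      using c by (auto simp: admissible_cuts_plus_def fringe_off_spine_def)
  qed
  then have "(\<Sum>c\<in>admissible_cuts_plus t. kappa \<phi> [Rc c (t, w)] * \<Phi> (Pc c (t, w))) =
      (\<Sum>c\<in>Pow ?F. kappa \<phi> [Rc c (t, w)] * \<Phi> (Pc c (t, w)))"
    by (intro sum.mono_neutral_right[OF fin_adm Pow_fringe_off_spine_subset[OF r]]) simp
  also have "\<dots> = K * (\<Sum>c\<in>Pow ?F. (-1) ^ card c)"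
    unfolding sum_distrib_left
    by (intro sum.cong) (simp_all add: cut_term_off_spine[OF x] K_def)
  also have "\<dots> = K * (if ?F = {} then 1 else 0)"
    by (simp add: sum_Pow_alternating[OF fin_F])
  also have "\<dots> = phi_ext \<phi> (t, w)"
  proof (cases "corolla t")
    case True
    then have "internal t = {[]}" and "seen_word t w {[]} = w"
      using seen_word_corolla_root[OF r l] by (simp_all add: corolla_def)
    with True show ?thesis
      using corolla_iff_prime_tree_no_fringe_off_spine r t
      by (simp add: K_def phi_ext_def ninternal_def)
  next
    case False
    with corolla_iff_prime_tree_no_fringe_off_spine r t show ?thesis
      by (auto simp: K_def phi_ext_def)
  qed
  finally show ?thesis .
qed

theorem Phi_eq_eps_plus_prec:
  assumes "basis_ok A xs"
  shows "\<Phi> xs = eps xs + prec (kappa \<phi>) \<Phi> xs"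
proof (cases xs)
  case Nil
  then show ?thesis by (simp add: Phi_Nil eps_def prec_def)
next
  case (Cons x ys)
  obtain t w where x: "x = (t, w)" by (cases x)
  have dx: "dtree_ok A (t, w)" and ys: "basis_ok A ys"
    using assms Cons x by (auto simp: basis_ok_def)
  have "prec (kappa \<phi>) \<Phi> xs = (\<Sum>c\<in>admissible_cuts_plus t. kappa \<phi> [Rc c x] * \<Phi> (Pc c x @ ys))"
    using prec_Cons[of "kappa \<phi>", OF kappa_Cons_Cons] assms Cons x by simp
  also have "\<dots> = (\<Sum>c\<in>admissible_cuts_plus t. kappa \<phi> [Rc c x] * \<Phi> (Pc c x)) * \<Phi> ys"
    unfolding sum_distrib_right mult.assoc x
    using Phi_append[OF basis_ok_Pc[OF dx] ys]
    by (intro sum.cong) (auto simp: admissible_cuts_plus_def admissible_cuts_def)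
  also have "\<dots> = \<Phi> [x] * \<Phi> ys"
    using sum_admissible_cuts_plus[OF dx] Phi_single[OF dx] x by simp
  also have "\<dots> = \<Phi> xs"
    using Phi_append[of "[x]" ys] dx ys x Cons by (simp add: basis_ok_def)
  finally show ?thesis
    using Cons by (simp add: eps_def)
qed

end

theorem mainTheorem8:
  fixes A :: "'a set" and \<phi> :: "'a list \<Rightarrow> complex"
    and \<Phi> :: "'a dtree list \<Rightarrow> complex"
  assumes "\<Phi> [] = 1"
    and "\<forall>xs ys. basis_ok A xs \<longrightarrow> basis_ok A ys \<longrightarrow> \<Phi> (xs @ ys) = \<Phi> xs * \<Phi> ys"
    and "\<forall>x. dtree_ok A x \<longrightarrow> \<Phi> [x] = phi_ext \<phi> x"
  shows "\<forall>xs. basis_ok A xs \<longrightarrow> \<Phi> xs = eps xs + prec (kappa \<phi>) \<Phi> xs"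
proof -
  interpret phi_character A \<phi> \<Phi>
    using assms by unfold_locales auto
  show ?thesis
    using Phi_eq_eps_plus_prec by blast
qed

end
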